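(* Let $R$ be a commutative Noetherian ring of prime characteristic $p$ and let $H$ be a left $R[x,f]$-module admitting an HSL-number $m_0$, such that the $x$-torsion-free module $G:=H/\Gamma_x(H)$ has only finitely many $G$-special $R$-ideals. Let $\mathfrak{b}$ be the unique member of $\mathcal{I}(G)$ of height $\ge1$ that is contained in every member of $\mathcal{I}(G)$ of height $\ge1$. For $h\in H$ the following are equivalent: (i) $h$ is annihilated by $\bigoplus_{n\ge m_0}\mathfrak{b}^{[p^{m_0}]}x^n$; (ii) there exists $c\in R^\circ\cap\mathfrak{b}$ with $cx^nh=0$ for all $n\ge m_0$; (iii) there exists $c\in R^\circ\cap\mathfrak{b}$ with $cx^nh=0$ for all $n\gg0$; (iv) there exists $c\in R^\circ$ with $cx^nh=0$ for all $n\gg0$.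
   Context: $R[x,f]$ is the Frobenius skew polynomial ring: free left $R$-module on $(x^i)_{i\ge0}$, with $xr=r^px$. $\Gamma_x(H)=\{h\in H: x^jh=0\text{ for some }j\in\mathbb{N}\}$, an $R[x,f]$-submodule; $H/\Gamma_x(H)$ is $x$-torsion-free ($xg=0\Rightarrow g=0$). $H$ admits an HSL-number if there is $e\in\mathbb{N}_0$ with $x^e\Gamma_x(H)=0$; the smallest such $e$ is the HSL-number. The graded annihilator $\operatorname{grann}N$ is the set of $\sum r_ix^i$ with each $r_ix^i$ annihilating $N$. An ideal $\mathfrak{b}$ of $R$ is $G$-special if $\operatorname{grann}N=\bigoplus_{n\ge0}\mathfrak{b}x^n$ for some $R[x,f]$-submodule $N$ of $G$; $\mathcal{I}(G)$ is the set of these; $R$ has infinite height. $\mathfrak{b}^{[q]}$ is the ideal generated by $q$-th powers of elements of $\mathfrak{b}$; $R^\circ$ is the complement of the union of minimal primes. *)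

theory Defs
  imports Main "HOL-Library.Extended_Nat" "HOL-Computational_Algebra.Primes"
begin

definition is_ideal :: "'a::comm_ring_1 set \<Rightarrow> bool" where
  "is_ideal I \<longleftrightarrow> 0 \<in> I \<and> (\<forall>a\<in>I. \<forall>b\<in>I. a + b \<in> I) \<and> (\<forall>r. \<forall>a\<in>I. r * a \<in> I)"

definition ideal_gen :: "'a::comm_ring_1 set \<Rightarrow> 'a set" where
  "ideal_gen S = \<Inter> {I. is_ideal I \<and> S \<subseteq> I}"

definition noetherian_ring :: "'a::comm_ring_1 itself \<Rightarrow> bool" where
  "noetherian_ring _ \<longleftrightarrow> (\<forall>I::'a set. is_ideal I \<longrightarrow> (\<exists>S. finite S \<and> I = ideal_gen S))"

definition prime_ideal :: "'a::comm_ring_1 set \<Rightarrow> bool" where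
  "prime_ideal P \<longleftrightarrow> is_ideal P \<and> P \<noteq> UNIV \<and> (\<forall>a b. a * b \<in> P \<longrightarrow> a \<in> P \<or> b \<in> P)"

definition minimal_prime :: "'a::comm_ring_1 set \<Rightarrow> bool" where
  "minimal_prime P \<longleftrightarrow> prime_ideal P \<and> \<not> (\<exists>Q. prime_ideal Q \<and> Q \<subset> P)"

definition height_prime :: "'a::comm_ring_1 set \<Rightarrow> enat" where
  "height_prime P = Sup {enat n | n. \<exists>Q :: nat \<Rightarrow> 'a set.
      (\<forall>i\<le>n. prime_ideal (Q i)) \<and> (\<forall>i<n. Q i \<subset> Q (Suc i)) \<and> Q n = P}"

text \<open>Height of an ideal: infimum over primes containing it (so the whole ring has height infinity).\<close>
definition height :: "'a::comm_ring_1 set \<Rightarrow> enat" where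
  "height I = (INF P \<in> {P. prime_ideal P \<and> I \<subseteq> P}. height_prime P)"

definition frob_power :: "'a::comm_ring_1 set \<Rightarrow> nat \<Rightarrow> 'a set" where
  "frob_power b q = ideal_gen {r ^ q | r. r \<in> b}"

definition R_circ :: "'a::comm_ring_1 set" where
  "R_circ = {c. \<forall>P. minimal_prime P \<longrightarrow> c \<notin> P}"

text \<open>A left R[x,f]-module is an R-module H (scalar action sm) together with the
  additive map X (action of x) satisfying x r = r^p x, i.e. X (r h) = r^p X h.\<close>
definition frob_module :: "nat \<Rightarrow> ('a::comm_ring_1 \<Rightarrow> 'h::ab_group_add \<Rightarrow> 'h) \<Rightarrow> ('h \<Rightarrow> 'h) \<Rightarrow> bool" where
  "frob_module p sm X \<longleftrightarrow> module sm \<and> (\<forall>g h. X (g + h) = X g + X h)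
      \<and> (\<forall>r h. X (sm r h) = sm (r ^ p) (X h))"

definition frob_submodule :: "('a::comm_ring_1 \<Rightarrow> 'h::ab_group_add \<Rightarrow> 'h) \<Rightarrow> ('h \<Rightarrow> 'h) \<Rightarrow> 'h set \<Rightarrow> bool" where
  "frob_submodule sm X N \<longleftrightarrow> 0 \<in> N \<and> (\<forall>g\<in>N. \<forall>h\<in>N. g + h \<in> N)
      \<and> (\<forall>r. \<forall>h\<in>N. sm r h \<in> N) \<and> (\<forall>h\<in>N. X h \<in> N)"

definition Gamma_x :: "('h::ab_group_add \<Rightarrow> 'h) \<Rightarrow> 'h set" where
  "Gamma_x X = {h. \<exists>j. (X ^^ j) h = 0}"

definition hsl_number :: "('h::ab_group_add \<Rightarrow> 'h) \<Rightarrow> nat \<Rightarrow> bool" where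
  "hsl_number X e \<longleftrightarrow> (\<forall>h\<in>Gamma_x X. (X ^^ e) h = 0)
      \<and> (\<forall>e'<e. \<exists>h\<in>Gamma_x X. (X ^^ e') h \<noteq> 0)"

text \<open>R[x,f]-submodules of G are N'/Gamma_x(H)
  for R[x,f]-submodules N' of H containing Gamma_x(H); r x^n annihilates N'/Gamma_x(H)
  iff r x^n h lies in Gamma_x(H) for all h in N'. So grann(N) = direct sum of b x^n
  iff for every n the set of r with r x^n N = 0 is exactly b.\<close>
definition G_special :: "('a::comm_ring_1 \<Rightarrow> 'h::ab_group_add \<Rightarrow> 'h) \<Rightarrow> ('h \<Rightarrow> 'h) \<Rightarrow> 'a set \<Rightarrow> bool" where
  "G_special sm X b \<longleftrightarrow> (\<exists>N. frob_submodule sm X N \<and> Gamma_x X \<subseteq> N \<and>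
      (\<forall>n. {r. \<forall>h\<in>N. sm r ((X ^^ n) h) \<in> Gamma_x X} = b))"

definition I_G :: "('a::comm_ring_1 \<Rightarrow> 'h::ab_group_add \<Rightarrow> 'h) \<Rightarrow> ('h \<Rightarrow> 'h) \<Rightarrow> 'a set set" where
  "I_G sm X = {b. G_special sm X b}"

end

theory Submission
  imports Defs
begin

text \<open>Since b has height at least 1 it lies in none of the finitely many minimal primes, so by
  prime avoidance it meets R^o in some c, and c^(p^m0) witnesses (i) \<Rightarrow> (ii).
  For (iv) \<Rightarrow> (i), let c \<in> R^o kill x^n h for n \<ge> N. The elements of G killed by every
  c x^n form an R[x,f]-submodule whose graded annihilator has the same ideal b' in every
  degree (because x r = r^p x), so b' is G-special; it contains c, hence has height at
  least 1 and contains b. As x^N h lies in that submodule, t x^k h \<in> Gamma_x(H) for all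
  t \<in> b, and the HSL-number gives t^(p^m0) x^(m0+k) h = x^m0 t x^k h = 0.\<close>

section \<open>Ideals of a Noetherian ring\<close>

lemma is_ideal_ideal_gen: "is_ideal (ideal_gen S)"
  unfolding ideal_gen_def is_ideal_def by auto

lemma ideal_gen_superset: "S \<subseteq> ideal_gen S"
  unfolding ideal_gen_def by auto

lemma ideal_gen_least: "is_ideal I \<Longrightarrow> S \<subseteq> I \<Longrightarrow> ideal_gen S \<subseteq> I"
  unfolding ideal_gen_def by auto

lemma ideal_add: "is_ideal I \<Longrightarrow> a \<in> I \<Longrightarrow> b \<in> I \<Longrightarrow> a + b \<in> I"
  unfolding is_ideal_def by blast

lemma ideal_mult_left: "is_ideal I \<Longrightarrow> a \<in> I \<Longrightarrow> r * a \<in> I"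
  unfolding is_ideal_def by blast

lemma ideal_mult_right: "is_ideal I \<Longrightarrow> a \<in> I \<Longrightarrow> a * r \<in> I"
  by (metis ideal_mult_left mult.commute)

lemma ideal_diff: "is_ideal I \<Longrightarrow> a \<in> I \<Longrightarrow> b \<in> I \<Longrightarrow> a - b \<in> I"
  using ideal_add[of I a "(-1) * b"] ideal_mult_left[of I b "-1"] by simp

lemma ideal_power: "is_ideal I \<Longrightarrow> a \<in> I \<Longrightarrow> 0 < k \<Longrightarrow> a ^ k \<in> I"
  by (metis ideal_mult_right gr0_conv_Suc power_Suc)

lemma ideal_eq_UNIV_if_one: "is_ideal I \<Longrightarrow> 1 \<in> I \<Longrightarrow> I = UNIV"
  using ideal_mult_left[of I 1] by auto

lemma prod_mem_ideal:
  "is_ideal I \<Longrightarrow> finite A \<Longrightarrow> a \<in> A \<Longrightarrow> f a \<in> I \<Longrightarrow> prod f A \<in> I"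
  by (metis ideal_mult_right prod.remove)

lemma prod_notin_prime_ideal:
  assumes "prime_ideal P" "finite A" "\<forall>a\<in>A. f a \<notin> P"
  shows "prod f A \<notin> P"
  using assms(2,3)
proof (induction A rule: finite_induct)
  case empty
  then show ?case using assms(1) ideal_eq_UNIV_if_one unfolding prime_ideal_def by auto
next
  case (insert a A)
  then show ?case using assms(1) unfolding prime_ideal_def by auto
qed

lemma prime_ideal_power: "prime_ideal P \<Longrightarrow> a ^ k \<in> P \<Longrightarrow> a \<in> P"
  using prod_notin_prime_ideal[of P "{..<k}" "\<lambda>_. a"] by auto

lemma is_ideal_Union_chain:
  assumes "subset.chain UNIV C" "C \<noteq> {}" "\<forall>I\<in>C. is_ideal I"
  shows "is_ideal (\<Union>C)"
  unfolding is_ideal_def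
proof (intro conjI ballI allI)
  show "0 \<in> \<Union>C" using assms(2,3) unfolding is_ideal_def by blast
next
  fix a b assume "a \<in> \<Union>C" "b \<in> \<Union>C"
  then obtain I J where "I \<in> C" "J \<in> C" "a \<in> I" "b \<in> J" by blast
  moreover have "I \<subseteq> J \<or> J \<subseteq> I" using assms(1) \<open>I \<in> C\<close> \<open>J \<in> C\<close>
    unfolding subset_chain_def by blast
  ultimately have "a \<in> I \<union> J" "b \<in> I \<union> J" "I \<union> J \<in> C"
    using \<open>I \<in> C\<close> \<open>J \<in> C\<close> by (metis Un_iff sup.absorb1 sup.absorb2)+
  then show "a + b \<in> \<Union>C" using assms(3) ideal_add by blast
next
  fix r a assume "a \<in> \<Union>C"
  then show "r * a \<in> \<Union>C" using assms(3) ideal_mult_left by blast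
qed

lemma noetherian_Union_chain_mem:
  assumes noeth: "noetherian_ring TYPE('a::comm_ring_1)"
    and C: "subset.chain UNIV C" "C \<noteq> {}" "\<forall>I\<in>C. is_ideal (I::'a set)"
  shows "\<Union>C \<in> C"
proof -
  obtain S where S: "finite S" "\<Union>C = ideal_gen S"
    using noeth is_ideal_Union_chain[OF C] unfolding noetherian_ring_def by blast
  then obtain I where I: "I \<in> C" "S \<subseteq> I"
    using finite_subset_Union_chain[OF S(1) _ C(2,1)] ideal_gen_superset[of S] by blast
  then have "\<Union>C = I" using S(2) ideal_gen_least C(3) by blast
  with I show ?thesis by simp
qed

lemma wf_ideal_supset:
  assumes noeth: "noetherian_ring TYPE('a::comm_ring_1)"
  shows "wf {(J, I::'a set). is_ideal I \<and> is_ideal J \<and> I \<subset> J}"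
  unfolding wf_iff_no_infinite_down_chain
proof (intro notI, elim exE)
  fix f :: "nat \<Rightarrow> 'a set"
  assume "\<forall>i. (f (Suc i), f i) \<in> {(J, I). is_ideal I \<and> is_ideal J \<and> I \<subset> J}"
  then have f: "\<forall>i. is_ideal (f i) \<and> f i \<subset> f (Suc i)" by simp
  then have "mono f" unfolding mono_iff_le_Suc by auto
  then have "f i \<subseteq> f j \<or> f j \<subseteq> f i" for i j
    by (metis le_cases monoD)
  then have "subset.chain UNIV (range f)"
    unfolding subset_chain_def by blast
  moreover have "\<forall>I\<in>range f. is_ideal I" using f by blast
  ultimately have "\<Union>(range f) \<in> range f"
    using noetherian_Union_chain_mem[OF noeth] by blast
  then obtain k where "\<Union>(range f) = f k" by auto
  then have "f (Suc k) \<subseteq> f k" by blast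
  then show False using f by blast
qed

section \<open>Minimal primes and R^o\<close>

definition prime_cover :: "'a::comm_ring_1 set \<Rightarrow> 'a set set \<Rightarrow> bool" where
  "prime_cover I F \<longleftrightarrow> finite F \<and> (\<forall>P\<in>F. prime_ideal P \<and> I \<subseteq> P)
     \<and> (\<forall>P. prime_ideal P \<and> I \<subseteq> P \<longrightarrow> (\<exists>Q\<in>F. Q \<subseteq> P))"

lemma prime_cover_UNIV: "prime_cover UNIV {}"
  unfolding prime_cover_def prime_ideal_def by (auto simp: top_le)

lemma prime_cover_prime: "prime_ideal P \<Longrightarrow> prime_cover P {P}"
  unfolding prime_cover_def by auto

lemma prime_cover_Un:
  assumes F: "prime_cover J F" and F': "prime_cover K F'" and "I \<subseteq> J" "I \<subseteq> K"
    and split: "\<And>P. prime_ideal P \<Longrightarrow> I \<subseteq> P \<Longrightarrow> J \<subseteq> P \<or> K \<subseteq> P"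
  shows "prime_cover I (F \<union> F')"
  unfolding prime_cover_def
proof (intro conjI allI impI)
  show "finite (F \<union> F')" using F F' unfolding prime_cover_def by simp
  show "\<forall>P\<in>F \<union> F'. prime_ideal P \<and> I \<subseteq> P"
    using F F' \<open>I \<subseteq> J\<close> \<open>I \<subseteq> K\<close> unfolding prime_cover_def by fast
  fix P assume P: "prime_ideal P \<and> I \<subseteq> P"
  then have "J \<subseteq> P \<or> K \<subseteq> P" using split by blast
  then show "\<exists>Q\<in>F \<union> F'. Q \<subseteq> P"
    using F F' P unfolding prime_cover_def by (meson UnCI)
qed

lemma prime_ideal_contains_insert:
  assumes P: "prime_ideal P" "I \<subseteq> P" and ab: "a * b \<in> I"
  shows "ideal_gen (insert a I) \<subseteq> P \<or> ideal_gen (insert b I) \<subseteq> P"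
proof -
  have "a \<in> P \<or> b \<in> P" using P ab unfolding prime_ideal_def by blast
  moreover have "is_ideal P" using P(1) unfolding prime_ideal_def by simp
  ultimately show ?thesis
    using P(2) ideal_gen_least[of P "insert a I"] ideal_gen_least[of P "insert b I"] by blast
qed

lemma ex_prime_cover:
  assumes noeth: "noetherian_ring TYPE('a::comm_ring_1)"
  shows "is_ideal (I::'a set) \<Longrightarrow> \<exists>F. prime_cover I F"
proof (induction I rule: wf_induct_rule[OF wf_ideal_supset[OF noeth]])
  case (1 I)
  consider "I = UNIV" | "prime_ideal I" | a b where "a * b \<in> I" "a \<notin> I" "b \<notin> I"
    using "1.prems" unfolding prime_ideal_def by blast
  then show ?case
  proof cases
    case 1
    then show ?thesis using prime_cover_UNIV by blast
  next
    case 2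
    then show ?thesis using prime_cover_prime by blast
  next
    case (3 a b)
    have ext: "(ideal_gen (insert x I), I) \<in> {(J, I). is_ideal I \<and> is_ideal J \<and> I \<subset> J}"
      if "x \<notin> I" for x
      using that "1.prems" is_ideal_ideal_gen ideal_gen_superset[of "insert x I"] by blast
    obtain F F' where "prime_cover (ideal_gen (insert a I)) F" "prime_cover (ideal_gen (insert b I)) F'"
      using "1.IH"[OF ext[OF 3(2)]] "1.IH"[OF ext[OF 3(3)]] is_ideal_ideal_gen by blast
    then have "prime_cover I (F \<union> F')"
      using ext[OF 3(2)] ext[OF 3(3)] prime_ideal_contains_insert[OF _ _ 3(1)]
      by (intro prime_cover_Un) auto
    then show ?thesis by blast
  qed
qed

lemma finite_minimal_primes:
  assumes noeth: "noetherian_ring TYPE('a::comm_ring_1)"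
  shows "finite {P::'a set. minimal_prime P}"
proof -
  have "is_ideal ({0}::'a set)" unfolding is_ideal_def by auto
  then obtain F where F: "prime_cover {0::'a} F"
    using ex_prime_cover[OF noeth] by blast
  have "{P::'a set. minimal_prime P} \<subseteq> F"
  proof
    fix P :: "'a set" assume "P \<in> {P. minimal_prime P}"
    then have P: "minimal_prime P" "prime_ideal P" "{0} \<subseteq> P"
      unfolding minimal_prime_def prime_ideal_def is_ideal_def by auto
    then obtain Q where "Q \<in> F" "Q \<subseteq> P" using F unfolding prime_cover_def by blast
    moreover have "prime_ideal Q" using F \<open>Q \<in> F\<close> unfolding prime_cover_def by blast
    ultimately show "P \<in> F" using P(1) unfolding minimal_prime_def by blast
  qed
  then show ?thesis using F finite_subset unfolding prime_cover_def by blast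
qed

lemma prime_avoidance_sum:
  assumes F: "finite F" "Q \<in> F" "\<forall>P\<in>F. prime_ideal P"
    and x: "\<forall>P\<in>F. x P \<in> P" "\<forall>P\<in>F. \<forall>P'\<in>F - {P}. x P \<notin> P'"
    and P: "P \<in> F"
  shows "x Q + prod x (F - {Q}) \<notin> P"
proof
  let ?\<pi> = "prod x (F - {Q})"
  assume sum: "x Q + ?\<pi> \<in> P"
  have idP: "is_ideal P" using F(3) P unfolding prime_ideal_def by blast
  show False
  proof (cases "P = Q")
    case True
    have "\<forall>P'\<in>F - {Q}. x P' \<notin> Q" using x(2) F(2) by blast
    then have "?\<pi> \<notin> P"
      using prod_notin_prime_ideal[of Q "F - {Q}" x] F(1,3) P True by simp
    moreover have "x Q \<in> P" using x(1) P True by simp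
    then have "(x Q + ?\<pi>) - x Q \<in> P" by (rule ideal_diff[OF idP sum])
    ultimately show False by simp
  next
    case False
    then have "P \<in> F - {Q}" using P by simp
    then have "?\<pi> \<in> P" using prod_mem_ideal[OF idP, of "F - {Q}" P x] F(1) x(1) by simp
    then have "(x Q + ?\<pi>) - ?\<pi> \<in> P" by (rule ideal_diff[OF idP sum])
    moreover have "x Q \<notin> P" using x(2) F(2) \<open>P \<in> F - {Q}\<close> by simp
    ultimately show False by simp
  qed
qed

lemma prime_avoidance:
  "finite F \<Longrightarrow> \<forall>P\<in>F. prime_ideal P \<Longrightarrow> is_ideal I \<Longrightarrow> \<forall>P\<in>F. \<not> I \<subseteq> P
   \<Longrightarrow> \<exists>y\<in>I. \<forall>P\<in>F. y \<notin> (P::'a::comm_ring_1 set)"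
proof (induction "card F" arbitrary: F rule: less_induct)
  case less
  consider "F = {}" | Q where "F = {Q}" | Q Q' where "Q \<in> F" "Q' \<in> F" "Q \<noteq> Q'"
    by (metis empty_iff is_singletonI' is_singleton_the_elem)
  then show ?case
  proof cases
    case 1
    then show ?thesis using less.prems(3) unfolding is_ideal_def by blast
  next
    case 2
    then show ?thesis using less.prems(4) by auto
  next
    case (3 Q Q')
    have "\<exists>y\<in>I. \<forall>P'\<in>F - {P}. y \<notin> P'" if "P \<in> F" for P
    proof (rule less.hyps)
      show "card (F - {P}) < card F" using less.prems(1) that by (rule card_Diff1_less)
    qed (use less.prems in auto)
    then obtain x where x: "\<forall>P\<in>F. x P \<in> I" "\<forall>P\<in>F. \<forall>P'\<in>F - {P}. x P \<notin> P'"
      by metis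
    show ?thesis
    proof (cases "\<exists>P\<in>F. x P \<notin> P")
      case True
      then obtain P where P: "P \<in> F" "x P \<notin> P" by blast
      have "x P \<notin> P'" if "P' \<in> F" for P'
        using that P x(2) by (cases "P' = P") auto
      then show ?thesis using x(1) P(1) by blast
    next
      case False
      have "Q' \<in> F - {Q}" using 3 by simp
      then have "prod x (F - {Q}) \<in> I"
        using prod_mem_ideal[OF less.prems(3), of "F - {Q}" Q' x] less.prems(1) x(1) by simp
      then have "x Q + prod x (F - {Q}) \<in> I"
        using ideal_add[OF less.prems(3)] x(1) 3(1) by simp
      moreover have "x Q + prod x (F - {Q}) \<notin> P" if "P \<in> F" for P
        using prime_avoidance_sum[OF less.prems(1) 3(1) less.prems(2) _ x(2) that] False by simp
      ultimately show ?thesis by blast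
    qed
  qed
qed

lemma height_prime_minimal:
  assumes "minimal_prime P"
  shows "height_prime P = 0"
  unfolding height_prime_def
proof (rule antisym[OF Sup_least zero_le])
  fix e assume "e \<in> {enat n | n. \<exists>C :: nat \<Rightarrow> 'a set.
      (\<forall>i\<le>n. prime_ideal (C i)) \<and> (\<forall>i<n. C i \<subset> C (Suc i)) \<and> C n = P}"
  then obtain n C where e: "e = enat n" "\<forall>i\<le>n. prime_ideal (C i)"
    "\<forall>i<n. C i \<subset> C (Suc i)" "C n = P"
    by blast
  have "n = 0"
  proof (rule ccontr)
    assume "n \<noteq> 0"
    then obtain m where "n = Suc m" using not0_implies_Suc by blast
    then have "prime_ideal (C m)" "C m \<subset> P" using e by auto
    then show False using assms unfolding minimal_prime_def by blast
  qed
  then show "e \<le> 0" using e(1) by (simp add: zero_enat_def)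
qed

lemma height_prime_ge_1:
  assumes "prime_ideal P" "\<not> minimal_prime P"
  shows "1 \<le> height_prime P"
proof -
  obtain Q where Q: "prime_ideal Q" "Q \<subset> P" using assms unfolding minimal_prime_def by blast
  have "enat 1 \<in> {enat n | n. \<exists>C :: nat \<Rightarrow> 'a set.
      (\<forall>i\<le>n. prime_ideal (C i)) \<and> (\<forall>i<n. C i \<subset> C (Suc i)) \<and> C n = P}"
    using Q assms(1) by (intro CollectI exI[of _ 1] conjI refl exI[of _ "\<lambda>i. if i = 0 then Q else P"])
      (auto simp: le_Suc_eq)
  then show ?thesis unfolding height_prime_def one_enat_def by (rule Sup_upper)
qed

lemma height_ge_1_if_R_circ_mem: "c \<in> R_circ \<Longrightarrow> c \<in> I \<Longrightarrow> 1 \<le> height I"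
  unfolding height_def R_circ_def by (auto intro!: INF_greatest height_prime_ge_1)

lemma ex_R_circ_mem_if_height_ge_1:
  assumes noeth: "noetherian_ring TYPE('a::comm_ring_1)"
    and I: "is_ideal (I::'a set)" "1 \<le> height I"
  shows "\<exists>c\<in>I. c \<in> R_circ"
proof -
  have "\<not> I \<subseteq> P" if "minimal_prime P" for P
  proof
    assume "I \<subseteq> P"
    then have "height I \<le> height_prime P"
      using that unfolding height_def minimal_prime_def by (intro INF_lower) auto
    then show False using I(2) height_prime_minimal[OF that] by simp
  qed
  then show ?thesis
    using prime_avoidance[OF finite_minimal_primes[OF noeth] _ I(1)]
    unfolding R_circ_def minimal_prime_def by auto
qed

lemma R_circ_power: "c \<in> R_circ \<Longrightarrow> c ^ k \<in> R_circ"
  unfolding R_circ_def minimal_prime_def using prime_ideal_power by blast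

section \<open>Left modules over R[x,f]\<close>

lemma frob_power_mem: "a \<in> b \<Longrightarrow> a ^ q \<in> frob_power b q"
  unfolding frob_power_def by (rule subsetD[OF ideal_gen_superset]) blast

lemma frob_power_least: "is_ideal J \<Longrightarrow> (\<And>a. a \<in> b \<Longrightarrow> a ^ q \<in> J) \<Longrightarrow> frob_power b q \<subseteq> J"
  unfolding frob_power_def by (rule ideal_gen_least) auto

locale frobenius_module = module sm
  for sm :: "'a::comm_ring_1 \<Rightarrow> 'h::ab_group_add \<Rightarrow> 'h" +
  fixes p :: nat and X :: "'h \<Rightarrow> 'h"
  assumes X_add: "X (g + h) = X g + X h"
    and X_scale: "X (sm r h) = sm (r ^ p) (X h)"

lemma frobenius_moduleI: "frob_module p sm X \<Longrightarrow> frobenius_module sm p X"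
  unfolding frob_module_def frobenius_module_def frobenius_module_axioms_def by simp

context frobenius_module
begin

lemma X_zero: "X 0 = 0"
  using X_add[of 0 0] by simp

lemma Xpow_zero: "(X ^^ n) 0 = 0"
  by (induction n) (simp_all add: X_zero)

lemma Xpow_add: "(X ^^ n) (g + h) = (X ^^ n) g + (X ^^ n) h"
  by (induction n) (auto simp: X_add)

lemma Xpow_scale: "(X ^^ n) (sm r h) = sm (r ^ p ^ n) ((X ^^ n) h)"
proof (induction n)
  case (Suc n)
  have "(r ^ p ^ n) ^ p = r ^ p ^ Suc n" by (simp add: power_mult[symmetric] mult.commute)
  then show ?case using Suc by (simp add: X_scale)
qed simp

lemma Xpow_Xpow: "(X ^^ m) ((X ^^ n) h) = (X ^^ (m + n)) h"
  by (simp add: funpow_add)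

lemma is_ideal_annihilator: "is_ideal {r. sm r g = 0}"
  unfolding is_ideal_def by (simp add: scale_left_distrib flip: scale_scale)

lemma zero_in_Gamma: "0 \<in> Gamma_x X"
  unfolding Gamma_x_def by (auto intro: exI[of _ 0])

lemma Gamma_add: "g \<in> Gamma_x X \<Longrightarrow> h \<in> Gamma_x X \<Longrightarrow> g + h \<in> Gamma_x X"
proof -
  assume "g \<in> Gamma_x X" "h \<in> Gamma_x X"
  then obtain i j where "(X ^^ i) g = 0" "(X ^^ j) h = 0" unfolding Gamma_x_def by blast
  then have "(X ^^ (j + i)) g = 0" "(X ^^ (i + j)) h = 0"
    by (simp_all add: funpow_add Xpow_zero)
  then have "(X ^^ (i + j)) (g + h) = 0" by (simp add: Xpow_add add.commute)
  then show ?thesis unfolding Gamma_x_def by blast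
qed

lemma Gamma_scale: "h \<in> Gamma_x X \<Longrightarrow> sm r h \<in> Gamma_x X"
proof -
  assume "h \<in> Gamma_x X"
  then obtain j where "(X ^^ j) h = 0" unfolding Gamma_x_def by blast
  then have "(X ^^ j) (sm r h) = 0" by (simp add: Xpow_scale)
  then show ?thesis unfolding Gamma_x_def by blast
qed

lemma Gamma_Xpow: "h \<in> Gamma_x X \<Longrightarrow> (X ^^ n) h \<in> Gamma_x X"
proof -
  assume "h \<in> Gamma_x X"
  then obtain j where "(X ^^ j) h = 0" unfolding Gamma_x_def by blast
  moreover have "(X ^^ j) ((X ^^ n) h) = (X ^^ n) ((X ^^ j) h)" by (simp only: Xpow_Xpow add.commute)
  ultimately have "(X ^^ j) ((X ^^ n) h) = 0" by (simp add: Xpow_zero)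
  then show ?thesis unfolding Gamma_x_def by blast
qed

lemma Gamma_if_Xpow: "(X ^^ n) h \<in> Gamma_x X \<Longrightarrow> h \<in> Gamma_x X"
proof -
  assume "(X ^^ n) h \<in> Gamma_x X"
  then obtain j where "(X ^^ j) ((X ^^ n) h) = 0" unfolding Gamma_x_def by blast
  then have "(X ^^ (j + n)) h = 0" by (simp only: Xpow_Xpow)
  then show ?thesis unfolding Gamma_x_def by blast
qed

lemma Gamma_if_scale_Xpow:
  assumes "0 < p" "sm r ((X ^^ n) g) \<in> Gamma_x X"
  shows "sm r g \<in> Gamma_x X"
proof (rule Gamma_if_Xpow)
  have "r ^ p ^ n = r ^ (p ^ n - 1) * r"
    using \<open>0 < p\<close> by (simp add: power_Suc2[symmetric])
  then have "(X ^^ n) (sm r g) = sm (r ^ (p ^ n - 1)) (sm r ((X ^^ n) g))"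
    by (simp add: Xpow_scale)
  then show "(X ^^ n) (sm r g) \<in> Gamma_x X" using Gamma_scale[OF assms(2)] by simp
qed

text \<open>The degree-n component of grann(N/Gamma_x(H)), N/Gamma_x(H) viewed inside G.\<close>
definition grann_deg :: "'h set \<Rightarrow> nat \<Rightarrow> 'a set" where
  "grann_deg N n = {r. \<forall>g\<in>N. sm r ((X ^^ n) g) \<in> Gamma_x X}"

lemma G_special_iff:
  "G_special sm X b \<longleftrightarrow> (\<exists>N. frob_submodule sm X N \<and> Gamma_x X \<subseteq> N \<and> (\<forall>n. grann_deg N n = b))"
  unfolding G_special_def grann_deg_def ..

lemma is_ideal_grann_deg: "is_ideal (grann_deg N n)"
  unfolding is_ideal_def grann_deg_def
  by (simp add: scale_left_distrib zero_in_Gamma Gamma_add Gamma_scale flip: scale_scale)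

lemma G_special_is_ideal: "G_special sm X b \<Longrightarrow> is_ideal b"
  unfolding G_special_iff by (metis is_ideal_grann_deg)

lemma grann_deg_Suc:
  assumes "0 < p" and N: "frob_submodule sm X N"
  shows "grann_deg N (Suc n) = grann_deg N n"
proof
  show "grann_deg N n \<subseteq> grann_deg N (Suc n)"
  proof
    fix r assume r: "r \<in> grann_deg N n"
    have "sm r ((X ^^ Suc n) g) \<in> Gamma_x X" if "g \<in> N" for g
    proof -
      have "X g \<in> N" using N that unfolding frob_submodule_def by blast
      moreover have "(X ^^ Suc n) g = (X ^^ n) (X g)" by (simp only: funpow_Suc_right o_apply)
      ultimately show ?thesis using r unfolding grann_deg_def by simp
    qed
    then show "r \<in> grann_deg N (Suc n)" unfolding grann_deg_def by blast
  qed
  show "grann_deg N (Suc n) \<subseteq> grann_deg N n"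
    unfolding grann_deg_def
    using Gamma_if_scale_Xpow[OF \<open>0 < p\<close>, where n = 1] by (auto simp: Xpow_scale)
qed

lemma G_special_grann_deg:
  assumes "0 < p" "frob_submodule sm X N" "Gamma_x X \<subseteq> N"
  shows "G_special sm X (grann_deg N 0)"
proof -
  have "grann_deg N n = grann_deg N 0" for n
    by (induction n) (simp_all add: grann_deg_Suc[OF assms(1,2)])
  then show ?thesis using assms(2,3) unfolding G_special_iff by blast
qed

text \<open>The preimage in H of the elements of G = H/Gamma_x(H) killed by every c x^n.\<close>
definition cx_kernel :: "'a \<Rightarrow> 'h set" where
  "cx_kernel c = {g. \<forall>n. sm c ((X ^^ n) g) \<in> Gamma_x X}"

lemma frob_submodule_cx_kernel: "frob_submodule sm X (cx_kernel c)"
  unfolding frob_submodule_def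
proof (intro conjI ballI allI)
  show "0 \<in> cx_kernel c" unfolding cx_kernel_def by (simp add: Xpow_zero zero_in_Gamma)
next
  fix g h assume "g \<in> cx_kernel c" "h \<in> cx_kernel c"
  then show "g + h \<in> cx_kernel c" unfolding cx_kernel_def
    by (simp add: Xpow_add scale_right_distrib Gamma_add)
next
  fix r h assume h: "h \<in> cx_kernel c"
  have "sm c ((X ^^ n) (sm r h)) \<in> Gamma_x X" for n
  proof -
    have "sm c ((X ^^ n) (sm r h)) = sm (r ^ p ^ n) (sm c ((X ^^ n) h))"
      by (simp add: Xpow_scale mult.commute)
    then show ?thesis using h Gamma_scale unfolding cx_kernel_def by (simp del: scale_scale)
  qed
  then show "sm r h \<in> cx_kernel c" unfolding cx_kernel_def by simp
next
  fix h assume "h \<in> cx_kernel c"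
  then have "sm c ((X ^^ Suc n) h) \<in> Gamma_x X" for n unfolding cx_kernel_def by blast
  then have "sm c ((X ^^ n) (X h)) \<in> Gamma_x X" for n by (simp only: funpow_Suc_right o_apply)
  then show "X h \<in> cx_kernel c" unfolding cx_kernel_def by blast
qed

lemma Gamma_subset_cx_kernel: "Gamma_x X \<subseteq> cx_kernel c"
  unfolding cx_kernel_def by (auto intro: Gamma_Xpow Gamma_scale)

lemma mem_grann_deg_cx_kernel: "c \<in> grann_deg (cx_kernel c) 0"
  unfolding grann_deg_def cx_kernel_def by (auto dest: spec[of _ 0])

text \<open>The G-special ideal grann_deg (cx_kernel c) 0 contains c \<in> R^o, so it contains b;
  and x^N h lies in cx_kernel c.\<close>
lemma scale_Xpow_in_Gamma_if_eventually_killed: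
  assumes "0 < p" and b_least: "\<forall>a\<in>I_G sm X. 1 \<le> height a \<longrightarrow> b \<subseteq> a"
    and c: "c \<in> R_circ" "\<forall>n\<ge>N. sm c ((X ^^ n) h) = 0" and "t \<in> b"
  shows "sm t ((X ^^ k) h) \<in> Gamma_x X"
proof -
  let ?A = "grann_deg (cx_kernel c) 0"
  have "?A \<in> I_G sm X"
    unfolding I_G_def
    using G_special_grann_deg[OF \<open>0 < p\<close> frob_submodule_cx_kernel Gamma_subset_cx_kernel] by simp
  moreover have "1 \<le> height ?A" using height_ge_1_if_R_circ_mem[OF c(1) mem_grann_deg_cx_kernel] .
  ultimately have "t \<in> ?A" using b_least \<open>t \<in> b\<close> by blast
  then have "t \<in> grann_deg (cx_kernel c) k"
    using grann_deg_Suc[OF \<open>0 < p\<close> frob_submodule_cx_kernel] by (induction k) simp_all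
  moreover have "(X ^^ N) h \<in> cx_kernel c"
    unfolding cx_kernel_def using c(2) zero_in_Gamma by (simp add: Xpow_Xpow)
  ultimately have "sm t ((X ^^ k) ((X ^^ N) h)) \<in> Gamma_x X" unfolding grann_deg_def by blast
  then have "sm t ((X ^^ N) ((X ^^ k) h)) \<in> Gamma_x X" by (simp add: Xpow_Xpow add.commute)
  then show ?thesis by (rule Gamma_if_scale_Xpow[OF \<open>0 < p\<close>])
qed

lemma frob_power_kills_if_eventually_killed:
  assumes "0 < p" and hsl: "hsl_number X m0" and b_least: "\<forall>a\<in>I_G sm X. 1 \<le> height a \<longrightarrow> b \<subseteq> a"
    and c: "c \<in> R_circ" "\<forall>n\<ge>N. sm c ((X ^^ n) h) = 0" and "m0 \<le> n"
  shows "frob_power b (p ^ m0) \<subseteq> {r. sm r ((X ^^ n) h) = 0}"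
proof (rule frob_power_least[OF is_ideal_annihilator])
  fix t assume "t \<in> b"
  obtain k where k: "n = m0 + k" using \<open>m0 \<le> n\<close> le_Suc_ex by blast
  have "sm t ((X ^^ k) h) \<in> Gamma_x X"
    using scale_Xpow_in_Gamma_if_eventually_killed[OF assms(1,3,4,5) \<open>t \<in> b\<close>] .
  then have "(X ^^ m0) (sm t ((X ^^ k) h)) = 0" using hsl unfolding hsl_number_def by blast
  then show "t ^ p ^ m0 \<in> {r. sm r ((X ^^ n) h) = 0}" by (simp add: Xpow_scale Xpow_Xpow k)
qed

end

theorem corollary3p16:
  fixes sm :: "'a::comm_ring_1 \<Rightarrow> 'h::ab_group_add \<Rightarrow> 'h"
    and X :: "'h \<Rightarrow> 'h" and p m0 :: nat and b :: "'a set" and h :: 'h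
  assumes noeth: "noetherian_ring TYPE('a)"
    and charp: "prime p" "CHAR('a) = p"
    and modH: "frob_module p sm X"
    and hsl: "hsl_number X m0"
    and fin: "finite (I_G sm X)"
    and b_mem: "b \<in> I_G sm X" and b_ht: "height b \<ge> 1"
    and b_least: "\<forall>a \<in> I_G sm X. height a \<ge> 1 \<longrightarrow> b \<subseteq> a"
  shows "((\<forall>n\<ge>m0. \<forall>r\<in>frob_power b (p ^ m0). sm r ((X ^^ n) h) = 0)
          \<longleftrightarrow> (\<exists>c\<in>R_circ \<inter> b. \<forall>n\<ge>m0. sm c ((X ^^ n) h) = 0))
       \<and> ((\<exists>c\<in>R_circ \<inter> b. \<forall>n\<ge>m0. sm c ((X ^^ n) h) = 0)
          \<longleftrightarrow> (\<exists>c\<in>R_circ \<inter> b. \<exists>N. \<forall>n\<ge>N. sm c ((X ^^ n) h) = 0))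
       \<and> ((\<exists>c\<in>R_circ \<inter> b. \<exists>N. \<forall>n\<ge>N. sm c ((X ^^ n) h) = 0)
          \<longleftrightarrow> (\<exists>c\<in>R_circ. \<exists>N. \<forall>n\<ge>N. sm c ((X ^^ n) h) = 0))"
proof -
  interpret frobenius_module sm p X using modH by (rule frobenius_moduleI)
  have "0 < p" using charp(1) by (rule prime_gt_0_nat)
  have "is_ideal b" using b_mem G_special_is_ideal unfolding I_G_def by blast
  then obtain c where c: "c \<in> b" "c \<in> R_circ" using ex_R_circ_mem_if_height_ge_1[OF noeth _ b_ht] by blast
  let ?i1 = "\<forall>n\<ge>m0. \<forall>r\<in>frob_power b (p ^ m0). sm r ((X ^^ n) h) = 0"
  let ?i2 = "\<exists>c\<in>R_circ \<inter> b. \<forall>n\<ge>m0. sm c ((X ^^ n) h) = 0"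
  let ?i4 = "\<exists>c\<in>R_circ. \<exists>N. \<forall>n\<ge>N. sm c ((X ^^ n) h) = 0"
  have "?i1 \<Longrightarrow> ?i2"
  proof -
    assume ?i1
    moreover have "c ^ p ^ m0 \<in> R_circ \<inter> b \<inter> frob_power b (p ^ m0)"
      using R_circ_power[OF c(2)] ideal_power[OF \<open>is_ideal b\<close> c(1)] frob_power_mem[OF c(1)] \<open>0 < p\<close>
      by simp
    ultimately show ?i2 by blast
  qed
  moreover have "?i4 \<Longrightarrow> ?i1"
  proof -
    assume ?i4
    then obtain c' N where "c' \<in> R_circ" "\<forall>n\<ge>N. sm c' ((X ^^ n) h) = 0" by blast
    from frob_power_kills_if_eventually_killed[OF \<open>0 < p\<close> hsl b_least this]
    show ?i1 by blast
  qed
  ultimately show ?thesis by blast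
qed

end
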